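(* For the system $$u_{0,0}-v_{1,1}=0,\qquad (u_{1,0}-u_{0,0})(v_{1,0}-u_{0,0})-(u_{0,1}-u_{0,0})(v_{0,1}-u_{0,0})=0,$$ the pair $$\rho_2=\frac{v_{1,0}-v_{0,0}+u_{-1,0}-u_{-2,0}}{(v_{0,0}-u_{-2,0})(v_{1,0}-u_{-1,0})},\qquad \sigma_2=\frac{1}{v_{-1,0}-u_{-3,0}}\left(\frac{u_{-2,0}-u_{-3,0}}{u_{-1,0}-u_{-2,0}}+\frac{v_{-1,0}-2u_{-2,0}+u_{-3,0}}{v_{0,0}-u_{-2,0}}\right)$$ is a conservation law, i.e. $(\mathcal T-1)\rho_2=(\mathcal S-1)\sigma_2$ on solutions.
   Context: Unknowns $u,v$ on $\mathbb Z^2$, $u_{i,j}=u(n+i,m+j)$, similarly $v$. Shifts $\mathcal S:n\mapsto n+1$, $\mathcal T:m\mapsto m+1$, acting by $\mathcal S^k\mathcal T^\ell(f_{i,j})=f_{i+k,j+\ell}$. A conservation law is a pair $(\rho,\sigma)$ of functions of finitely many shifts of $(u,v)$ such that $(\mathcal T-1)\rho=(\mathcal S-1)\sigma$ holds for all solutions of the system (on which all denominators are nonzero). *)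

theory Defs
  imports Complex_Main
begin

text \<open>Fields u, v on Z^2; u n m stands for u(n,m). The shifted value u_{i,j} at base point
(n,m) is u (n+i) (m+j).\<close>

definition rho2 :: "(int \<Rightarrow> int \<Rightarrow> real) \<Rightarrow> (int \<Rightarrow> int \<Rightarrow> real) \<Rightarrow> int \<Rightarrow> int \<Rightarrow> real" where
  "rho2 u v n m =
     (v (n+1) m - v n m + u (n-1) m - u (n-2) m) /
     ((v n m - u (n-2) m) * (v (n+1) m - u (n-1) m))"

definition sigma2 :: "(int \<Rightarrow> int \<Rightarrow> real) \<Rightarrow> (int \<Rightarrow> int \<Rightarrow> real) \<Rightarrow> int \<Rightarrow> int \<Rightarrow> real" where
  "sigma2 u v n m =
     (1 / (v (n-1) m - u (n-3) m)) *
     ((u (n-2) m - u (n-3) m) / (u (n-1) m - u (n-2) m)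
      + (v (n-1) m - 2 * u (n-2) m + u (n-3) m) / (v n m - u (n-2) m))"

definition is_solution :: "(int \<Rightarrow> int \<Rightarrow> real) \<Rightarrow> (int \<Rightarrow> int \<Rightarrow> real) \<Rightarrow> bool" where
  "is_solution u v \<longleftrightarrow> (\<forall>n m.
     u n m - v (n+1) (m+1) = 0 \<and>
     (u (n+1) m - u n m) * (v (n+1) m - u n m) - (u n (m+1) - u n m) * (v n (m+1) - u n m) = 0)"

definition denoms_nonzero :: "(int \<Rightarrow> int \<Rightarrow> real) \<Rightarrow> (int \<Rightarrow> int \<Rightarrow> real) \<Rightarrow> bool" where
  "denoms_nonzero u v \<longleftrightarrow> (\<forall>n m.
     v n m - u (n-2) m \<noteq> 0 \<and> v (n+1) m - u (n-1) m \<noteq> 0 \<and>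
     v (n-1) m - u (n-3) m \<noteq> 0 \<and> u (n-1) m - u (n-2) m \<noteq> 0)"

end

theory Submission
  imports Defs
begin

text \<open>The first equation makes row m+1 of v a shift of row m of u, and the quad-graph
equation is linear in the remaining unknown of row m+1, so it expresses each gap
u(k+1,m) - u(k,m+1) through row m. On solutions both sides of the conservation law thereby
become rational functions of row m alone, and they agree by a rational identity in the
consecutive differences of that row.\<close>

lemma quad_edge_solve:
  fixes a b c p y :: "'a :: field"
  assumes "(c - b) * (p - b) = (y - b) * (a - b)" and "a \<noteq> b"
  shows "c - y = (c - b) * (p - a) / (b - a)"
  using assms by (simp add: field_simps)

lemma difference_identity:
  fixes B C D P Q W :: "'a :: field"
  assumes "B \<noteq> 0" "C \<noteq> 0" "D \<noteq> 0" "P \<noteq> 0" "Q \<noteq> 0" "W \<noteq> 0"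
  shows "(C * W / B - D * P / C + 2 * D) / (C * W / B * (D * P / C)) - (2 * C + Q - P) / (P * Q)
    = 1 / P * (C / D + (P - 2 * C) / Q) - 1 / W * (B / C + (W - 2 * B) / P)"
  using assms by (simp add: field_simps)

text \<open>Here a, b, c, d are u at n-3, ..., n, and w, p, q are v at n-1, n, n+1, all in row m;
x and y are u at n-1 and n-2 in row m+1.\<close>

lemma lower_row_identity:
  fixes a b c d p q w x y :: "'a :: field"
  assumes "a \<noteq> b" "b \<noteq> c" "c \<noteq> d" "p \<noteq> b" "q \<noteq> c" "w \<noteq> a"
    and "c - y = (c - b) * (w - a) / (b - a)"
    and "d - x = (d - c) * (p - b) / (c - b)"
  shows "(d - c + x - y) / ((c - y) * (d - x)) - (q - p + c - b) / ((p - b) * (q - c))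
   = 1 / (p - b) * ((c - b) / (d - c) + (p - 2*c + b) / (q - c))
     - 1 / (w - a) * ((b - a) / (c - b) + (w - 2*b + a) / (p - b))"
proof -
  have regroup: "d - c + x - y = (c - y) - (d - x) + 2 * (d - c)"
    "q - p + c - b = 2 * (c - b) + (q - c) - (p - b)"
    "p - 2*c + b = (p - b) - 2 * (c - b)"
    "w - 2*b + a = (w - a) - 2 * (b - a)"
    by (simp_all add: algebra_simps)
  show ?thesis
    unfolding regroup assms(7,8)
    by (rule difference_identity) (use assms(1-6) in auto)
qed

lemma solution_v_shift:
  assumes "is_solution u v"
  shows "v k (m + 1) = u (k - 1) m"
  using assms unfolding is_solution_def by (metis diff_add_cancel eq_iff_diff_eq_0)

lemma solution_upper_gap:
  assumes "is_solution u v" and "u (k - 1) m \<noteq> u k m"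
  shows "u (k + 1) m - u k (m + 1)
    = (u (k + 1) m - u k m) * (v (k + 1) m - u (k - 1) m) / (u k m - u (k - 1) m)"
proof (rule quad_edge_solve)
  have "(u (k + 1) m - u k m) * (v (k + 1) m - u k m)
      - (u k (m + 1) - u k m) * (v k (m + 1) - u k m) = 0"
    using assms(1) unfolding is_solution_def by blast
  then show "(u (k + 1) m - u k m) * (v (k + 1) m - u k m)
      = (u k (m + 1) - u k m) * (u (k - 1) m - u k m)"
    using solution_v_shift[OF assms(1)] by simp
qed (use assms(2) in simp)

lemma denoms_nonzeroD:
  assumes "denoms_nonzero u v"
  shows "u (k - 1) m \<noteq> u k m" and "v k m \<noteq> u (k - 2) m"
proof -
  have "u (k + 1 - 1) m - u (k + 1 - 2) m \<noteq> 0" "v (k + 1 - 1) m - u (k + 1 - 3) m \<noteq> 0"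
    using assms unfolding denoms_nonzero_def by blast+
  then show "u (k - 1) m \<noteq> u k m" "v k m \<noteq> u (k - 2) m"
    by simp_all
qed

theorem mainTheorem13:
  fixes u v :: "int \<Rightarrow> int \<Rightarrow> real"
  assumes "is_solution u v"
    and "denoms_nonzero u v"
  shows "\<forall>n m. rho2 u v n (m+1) - rho2 u v n m = sigma2 u v (n+1) m - sigma2 u v n m"
proof (intro allI)
  fix n m :: int
  note distinct = denoms_nonzeroD[OF assms(2)]
  have consecutive:
    "u (n - 3) m \<noteq> u (n - 2) m" "u (n - 2) m \<noteq> u (n - 1) m" "u (n - 1) m \<noteq> u n m"
    using distinct(1)[of "n - 2" m] distinct(1)[of "n - 1" m] distinct(1)[of n m] by simp_all
  have v_off:
    "v n m \<noteq> u (n - 2) m" "v (n + 1) m \<noteq> u (n - 1) m" "v (n - 1) m \<noteq> u (n - 3) m"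
    using distinct(2)[of n m] distinct(2)[of "n + 1" m] distinct(2)[of "n - 1" m] by simp_all
  have upper_gaps:
    "u (n - 1) m - u (n - 2) (m + 1)
      = (u (n - 1) m - u (n - 2) m) * (v (n - 1) m - u (n - 3) m) / (u (n - 2) m - u (n - 3) m)"
    "u n m - u (n - 1) (m + 1)
      = (u n m - u (n - 1) m) * (v n m - u (n - 2) m) / (u (n - 1) m - u (n - 2) m)"
    using solution_upper_gap[OF assms(1), of "n - 2" m] solution_upper_gap[OF assms(1), of "n - 1" m]
      consecutive
    by simp_all
  have indices: "n + 1 - 1 = n" "n + 1 - 2 = n - 1" "n + 1 - 3 = n - 2"
    by simp_all
  show "rho2 u v n (m+1) - rho2 u v n m = sigma2 u v (n+1) m - sigma2 u v n m"
    unfolding rho2_def sigma2_def solution_v_shift[OF assms(1)] indices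
    by (rule lower_row_identity[OF consecutive v_off upper_gaps])
qed

end
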